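(* Let $q$ be a prime with $q\equiv 3 \pmod 4$. Let $x^1,y^1,x^2,y^2 \in \mathbb{F}_q^2$ with $\|x^1-y^1\| = \|x^2-y^2\|$ and $x^1-y^1 \ne x^2-y^2$. Then there exists a unique pair $(p,\theta)$ with $p \in \mathbb{F}_q^2$ and $\theta \in SO(2,q)\setminus\{I\}$ such that $f_{p,\theta}(x^1) = x^2$ and $f_{p,\theta}(y^1)=y^2$.
   Context: $\|(a_1,a_2)\| = a_1^2+a_2^2$. $SO(2,q) = \{A \in \mathrm{Mat}_2(\mathbb{F}_q) : A^TA = I, \det A = 1\} = \left\{\begin{pmatrix} a & -b\\ b & a\end{pmatrix} : a^2+b^2=1\right\}$. For $p \in \mathbb{F}_q^2$ (column vector) and $\theta \in SO(2,q)$, $f_{p,\theta}:\mathbb{F}_q^2\to\mathbb{F}_q^2$ is $f_{p,\theta}(x) = \theta(x-p)+p$. *)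

theory Defs
  imports "HOL-Analysis.Analysis"
begin

text \<open>Vectors of F_q^2 are column vectors of type 'a ^ 2, matrices 'a ^ 2 ^ 2.\<close>

definition sqnorm :: "'a::comm_ring_1 ^ 2 \<Rightarrow> 'a" where
  "sqnorm x = (x $ 1)^2 + (x $ 2)^2"

definition SO2 :: "('a::comm_ring_1 ^ 2 ^ 2) set" where
  "SO2 = {A. transpose A ** A = mat 1 \<and> det A = 1}"

definition frot :: "'a::comm_ring_1 ^ 2 \<Rightarrow> 'a ^ 2 ^ 2 \<Rightarrow> 'a ^ 2 \<Rightarrow> 'a ^ 2" where
  "frot p \<theta> x = \<theta> *v (x - p) + p"

end

theory Submission
  imports Defs "HOL-Number_Theory.Residues"
begin

text \<open>
  Identify \<open>\<bbbF>\<^sub>q\<^sup>2\<close> with \<open>\<bbbF>\<^sub>q[i]\<close>: since \<open>-1\<close> is not a square when \<open>q \<equiv> 3 (mod 4)\<close>,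
  the norm \<open>a\<^sup>2 + b\<^sup>2\<close> vanishes only at \<open>0\<close>, and \<open>SO(2,q)\<close> consists of the multiplications
  by elements of norm \<open>1\<close>. As \<open>f\<^sub>p\<^sub>,\<^sub>\<theta>(x) = \<theta>x + (1 - \<theta>)p\<close>, the two conditions say exactly
  that \<open>\<theta>(x\<^sup>1 - y\<^sup>1) = x\<^sup>2 - y\<^sup>2\<close> and \<open>(1 - \<theta>)p = x\<^sup>2 - \<theta>x\<^sup>1\<close>. The first forces
  \<open>\<theta> = (x\<^sup>2 - y\<^sup>2)/(x\<^sup>1 - y\<^sup>1)\<close>, which has norm \<open>1\<close> and differs from \<open>1\<close>;
  then \<open>1 - \<theta>\<close> has nonzero norm, so the second determines \<open>p\<close>.
\<close>

lemma finite_field_power_card_minus_one: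
  fixes x :: "'a::{field,finite}"
  assumes "x \<noteq> 0"
  shows "x ^ (CARD('a) - 1) = 1"
proof -
  let ?U = "UNIV - {0::'a}"
  have "(\<Prod>y\<in>?U. x * y) = (\<Prod>y\<in>?U. y)"
    by (rule prod.reindex_bij_witness[of _ "\<lambda>y. y / x" "\<lambda>y. x * y"]) (use assms in auto)
  moreover have "(\<Prod>y\<in>?U. x * y) = x ^ card ?U * (\<Prod>y\<in>?U. y)"
    by (simp add: prod.distrib)
  ultimately show ?thesis
    by (simp add: card_Diff_singleton)
qed

lemma minus_one_not_square:
  fixes i :: "'a::{field,finite}"
  assumes "CARD('a) mod 4 = 3"
  shows "i\<^sup>2 \<noteq> -1"
proof
  assume i: "i\<^sup>2 = -1"
  obtain k where k: "CARD('a) = 4 * k + 3"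
    using assms by (metis mod_div_mult_eq add.commute mult.commute)
  have "i \<noteq> 0"
    using i by auto
  have "1 = i ^ (CARD('a) - 1)"
    using finite_field_power_card_minus_one[OF \<open>i \<noteq> 0\<close>] by simp
  also have "\<dots> = (i\<^sup>2) ^ (2 * k + 1)"
    unfolding power_mult [symmetric] using k by (simp add: mult.commute)
  also have "\<dots> = -1"
    using i by simp
  finally have two: "(2::'a) = 0"
    by (metis add_eq_0_iff one_add_one)
  have "of_nat CARD('a) = (0::'a)"
    by (simp add: CHAR_dvd_CARD of_nat_eq_0_iff_char_dvd)
  then have "2 * (2 * of_nat k + 1) + 1 = (0::'a)"
    unfolding k by (simp add: algebra_simps)
  with two show False
    by simp
qed

lemma sqnorm_eq_0_iff:
  fixes z :: "'a::field ^ 2"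
  assumes "\<And>i::'a. i\<^sup>2 \<noteq> -1"
  shows "sqnorm z = 0 \<longleftrightarrow> z = 0"
proof
  assume z: "sqnorm z = 0"
  have "z $ 2 = 0"
  proof (rule ccontr)
    assume "z $ 2 \<noteq> 0"
    then have "(z $ 1 / z $ 2)\<^sup>2 = -1"
      using z by (simp add: sqnorm_def power_divide field_simps eq_neg_iff_add_eq_0)
    with assms show False
      by blast
  qed
  with z show "z = 0"
    by (simp add: sqnorm_def vec_eq_iff forall_2)
qed (simp add: sqnorm_def)

text \<open>Identifying \<open>'a ^ 2\<close> with \<open>'a[i]\<close>, \<open>rot z\<close> is the matrix of multiplication by \<open>z\<close>.\<close>

definition rot :: "'a::comm_ring_1 ^ 2 \<Rightarrow> 'a ^ 2 ^ 2" where
  "rot z = (\<chi> i j. if i = 1 then (if j = 1 then z $ 1 else - z $ 2)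
                            else (if j = 1 then z $ 2 else z $ 1))"

lemma rot_mult_vec:
  "rot z *v w = (\<chi> i. if i = 1 then z$1 * w$1 - z$2 * w$2 else z$2 * w$1 + z$1 * w$2)"
  by (simp add: rot_def matrix_vector_mult_def sum_2 vec_eq_iff forall_2)

lemma rot_mult_vec_commute: "rot z *v w = rot w *v z"
  by (simp add: rot_mult_vec vec_eq_iff forall_2 algebra_simps)

lemma sqnorm_rot_mult_vec: "sqnorm (rot z *v w) = sqnorm z * sqnorm w"
  by (simp add: rot_mult_vec sqnorm_def power2_eq_square algebra_simps)

lemma det_rot: "det (rot z) = sqnorm z"
  by (simp add: rot_def det_2 sqnorm_def power2_eq_square)

lemma mat_1_eq_rot: "mat 1 = rot (axis 1 1)"
  by (simp add: rot_def mat_def axis_def vec_eq_iff forall_2)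

lemma rot_diff: "rot (z - w) = rot z - rot w"
  by (simp add: rot_def vec_eq_iff forall_2)

lemma SO2_eq_rot_image: "SO2 = rot ` {z. sqnorm z = 1}"
proof (intro equalityI subsetI)
  fix A :: "'a ^ 2 ^ 2"
  assume "A \<in> SO2"
  then have orth: "transpose A ** A = mat 1" and det: "det A = 1"
    by (auto simp: SO2_def)
  define a b c d where "a = A$1$1" and "b = A$2$1" and "c = A$1$2" and "d = A$2$2"
  have col1: "a * a + b * b = 1"
    using arg_cong[OF orth, of "\<lambda>X. X$1$1"]
    by (simp add: matrix_matrix_mult_def transpose_def mat_def sum_2 a_def b_def)
  have cols: "a * c + b * d = 0"
    using arg_cong[OF orth, of "\<lambda>X. X$1$2"]
    by (simp add: matrix_matrix_mult_def transpose_def mat_def sum_2 a_def b_def c_def d_def)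
  have det': "a * d - c * b = 1"
    using det by (simp add: det_2 a_def b_def c_def d_def)
  have "d = d * (a * a + b * b)"
    using col1 by simp
  also have "\<dots> = a * (a * d - c * b) + b * (a * c + b * d)"
    by (simp add: algebra_simps)
  finally have "d = a"
    using cols det' by simp
  have "c = c * (a * a + b * b)"
    using col1 by simp
  also have "\<dots> = a * (a * c + b * d) - b * (a * d - c * b)"
    by (simp add: algebra_simps)
  finally have "c = - b"
    using cols det' by simp
  have "A = rot (\<chi> i. if i = 1 then a else b)"
    using \<open>d = a\<close> \<open>c = - b\<close>
    by (simp add: rot_def vec_eq_iff forall_2 a_def b_def c_def d_def)
  moreover have "sqnorm (\<chi> i. if i = 1 then a else b) = 1"
    using col1 by (simp add: sqnorm_def power2_eq_square)
  ultimately show "A \<in> rot ` {z. sqnorm z = 1}"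
    by blast
next
  fix A :: "'a ^ 2 ^ 2"
  assume "A \<in> rot ` {z. sqnorm z = 1}"
  then obtain z where "A = rot z" "sqnorm z = 1"
    by blast
  then show "A \<in> SO2"
    by (simp add: SO2_def rot_def det_2 sqnorm_def vec_eq_iff forall_2 matrix_matrix_mult_def
        transpose_def mat_def sum_2 power2_eq_square algebra_simps)
qed

lemma ex1_rot_mult_vec_eq:
  fixes z :: "'a::field ^ 2"
  assumes "sqnorm z \<noteq> 0"
  shows "\<exists>!v. rot z *v v = w"
proof -
  have "bij ((*v) (rot z))"
    using assms by (simp add: invertible_eq_bij [symmetric] invertible_det_nz det_rot)
  then show ?thesis
    by (metis bij_pointE)
qed

lemma frot_eq_affine: "frot p \<theta> x = \<theta> *v x + (mat 1 - \<theta>) *v p"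
  by (simp add: frot_def matrix_vector_mult_diff_distrib matrix_vector_mult_diff_rdistrib)

lemma frot_pair_iff:
  "frot p \<theta> x1 = x2 \<and> frot p \<theta> y1 = y2 \<longleftrightarrow>
     \<theta> *v (x1 - y1) = x2 - y2 \<and> (mat 1 - \<theta>) *v p = x2 - \<theta> *v x1"
proof -
  have "a1 + c = b1 \<and> a2 + c = b2 \<longleftrightarrow> a1 - a2 = b1 - b2 \<and> c = b1 - a1"
    for a1 a2 b1 b2 c :: "'a ^ 2"
    by (auto simp: eq_diff_eq' diff_eq_eq algebra_simps)
  then show ?thesis
    by (simp add: frot_eq_affine matrix_vector_mult_diff_distrib)
qed

lemma ex1_rotation_mapping_pair:
  fixes x1 y1 x2 y2 :: "'a::field ^ 2"
  assumes anisotropic: "\<And>v::'a ^ 2. sqnorm v = 0 \<Longrightarrow> v = 0"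
    and same_sqnorm: "sqnorm (x1 - y1) = sqnorm (x2 - y2)"
    and distinct: "x1 - y1 \<noteq> x2 - y2"
  shows "\<exists>!z :: ('a ^ 2) \<times> ('a ^ 2 ^ 2). case z of (p, \<theta>) \<Rightarrow>
           \<theta> \<in> SO2 - {mat 1} \<and> frot p \<theta> x1 = x2 \<and> frot p \<theta> y1 = y2"
proof -
  define u w where "u = x1 - y1" and "w = x2 - y2"
  have "sqnorm u \<noteq> 0"
    using anisotropic same_sqnorm distinct unfolding u_def w_def by metis
  then obtain z where z: "rot u *v z = w" and z_unique: "\<And>z'. rot u *v z' = w \<Longrightarrow> z' = z"
    using ex1_rot_mult_vec_eq by metis
  have rotation_iff: "\<theta> \<in> SO2 - {mat 1} \<and> \<theta> *v u = w \<longleftrightarrow> \<theta> = rot z" for \<theta>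
  proof
    assume "\<theta> \<in> SO2 - {mat 1} \<and> \<theta> *v u = w"
    then obtain z' where "\<theta> = rot z'" "rot u *v z' = w"
      by (auto simp: SO2_eq_rot_image rot_mult_vec_commute)
    then show "\<theta> = rot z"
      using z_unique by simp
  next
    assume \<theta>: "\<theta> = rot z"
    have "sqnorm u * sqnorm z = sqnorm u"
      using z same_sqnorm sqnorm_rot_mult_vec[of u z] unfolding u_def w_def by simp
    then have "sqnorm z = 1"
      using \<open>sqnorm u \<noteq> 0\<close> by simp
    moreover have "rot z \<noteq> mat 1"
      using z distinct rot_mult_vec_commute[of u z] unfolding u_def w_def by auto
    ultimately show "\<theta> \<in> SO2 - {mat 1} \<and> \<theta> *v u = w"
      using \<theta> z by (auto simp: SO2_eq_rot_image rot_mult_vec_commute)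
  qed
  have "rot z \<noteq> mat 1"
    using rotation_iff by blast
  then have "z \<noteq> axis 1 1"
    by (auto simp: mat_1_eq_rot)
  then have "sqnorm (axis 1 1 - z) \<noteq> 0"
    using anisotropic by force
  then obtain p where p: "(mat 1 - rot z) *v p = x2 - rot z *v x1"
    and p_unique: "\<And>p'. (mat 1 - rot z) *v p' = x2 - rot z *v x1 \<Longrightarrow> p' = p"
    using ex1_rot_mult_vec_eq unfolding mat_1_eq_rot rot_diff [symmetric] by metis
  show ?thesis
  proof (rule ex1I[of _ "(p, rot z)"])
    show "case (p, rot z) of (p, \<theta>) \<Rightarrow>
            \<theta> \<in> SO2 - {mat 1} \<and> frot p \<theta> x1 = x2 \<and> frot p \<theta> y1 = y2"
      using rotation_iff[of "rot z"] p by (simp add: frot_pair_iff u_def w_def)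
  next
    fix z' :: "('a ^ 2) \<times> ('a ^ 2 ^ 2)"
    assume "case z' of (p, \<theta>) \<Rightarrow>
              \<theta> \<in> SO2 - {mat 1} \<and> frot p \<theta> x1 = x2 \<and> frot p \<theta> y1 = y2"
    then obtain p' \<theta> where z': "z' = (p', \<theta>)" and "\<theta> \<in> SO2 - {mat 1}"
      and "\<theta> *v u = w" and p': "(mat 1 - \<theta>) *v p' = x2 - \<theta> *v x1"
      by (auto simp: frot_pair_iff u_def w_def)
    then have "\<theta> = rot z"
      using rotation_iff by blast
    with p' p_unique show "z' = (p, rot z)"
      using z' by simp
  qed
qed

theorem lemma2p1:
  fixes x1 y1 x2 y2 :: "'a::{field,finite} ^ 2" and q :: nat
  assumes "prime q" and "CARD('a) = q" and "q mod 4 = 3"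
    and "sqnorm (x1 - y1) = sqnorm (x2 - y2)"
    and "x1 - y1 \<noteq> x2 - y2"
  shows "\<exists>!z :: ('a ^ 2) \<times> ('a ^ 2 ^ 2). case z of (p, \<theta>) \<Rightarrow>
           \<theta> \<in> SO2 - {mat 1} \<and> frot p \<theta> x1 = x2 \<and> frot p \<theta> y1 = y2"
proof -
  have "i\<^sup>2 \<noteq> -1" for i :: 'a
    using minus_one_not_square[where 'a='a] assms(2,3) by simp
  then have "sqnorm v = 0 \<Longrightarrow> v = 0" for v :: "'a ^ 2"
    using sqnorm_eq_0_iff by blast
  then show ?thesis
    by (rule ex1_rotation_mapping_pair) (use assms(4,5) in auto)
qed

end
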